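(* Let $n\ge 2$ be an integer, let $a_1,\dots,a_n>0$ with $\sum_{k=1}^n a_k=1$, and let $c_k,d_k,\beta_k\in\mathbb{R}$ ($k=1,\dots,n$) with $\max_{1\le k\le n}|d_k|<1$. Put $\alpha_1=0$, $\alpha_k=\sum_{j=1}^{k-1}a_j$ for $k=2,\dots,n+1$, and $S_k(x)=a_kx+\alpha_k$. Let $f\in C[0;1]$ be a continuous function satisfying $f=G(f)$, where $$[G(f)](t)=\sum_{k=1}^n\bigl(d_k f(S_k^{-1}(t))+c_k t+\beta_k\bigr)\chi_{I_k}(t),\qquad I_1=[0;\alpha_2],\ I_k=(\alpha_k;\alpha_{k+1}]\ (k\ge2).$$ Suppose $|d_i|/a_i=1$ for all $i=1,\dots,n$. Then for every $\alpha\in(0;1)$ there is a constant $C\ge0$ such that $|f(x)-f(y)|\le C|x-y|^\alpha$ for all $x,y\in[0;1]$.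
   Context: Here $\chi_I$ is the indicator function of the interval $I$. A continuous function $f$ with $G(f)=f$ is called an (affine) self-similar function with self-similarity parameters $\{a_k\},\{c_k\},\{d_k\},\{\beta_k\}$. *)

theory Defs
  imports "HOL-Analysis.Analysis"
begin

text \<open>Parameters are indexed by k = 1..n as in the paper.\<close>

definition ss_alpha :: "(nat \<Rightarrow> real) \<Rightarrow> nat \<Rightarrow> real" where
  "ss_alpha a k = (\<Sum>j=1..<k. a j)"

definition ss_S :: "(nat \<Rightarrow> real) \<Rightarrow> nat \<Rightarrow> real \<Rightarrow> real" where
  "ss_S a k x = a k * x + ss_alpha a k"

definition ss_I :: "(nat \<Rightarrow> real) \<Rightarrow> nat \<Rightarrow> real set" where
  "ss_I a k = (if k = 1 then {0..ss_alpha a 2} else {ss_alpha a k<..ss_alpha a (k+1)})"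

definition ss_G :: "nat \<Rightarrow> (nat \<Rightarrow> real) \<Rightarrow> (nat \<Rightarrow> real) \<Rightarrow> (nat \<Rightarrow> real) \<Rightarrow> (nat \<Rightarrow> real)
     \<Rightarrow> (real \<Rightarrow> real) \<Rightarrow> real \<Rightarrow> real" where
  "ss_G n a c d \<beta> f t =
     (\<Sum>k=1..n. (d k * f (inv_into UNIV (ss_S a k) t) + c k * t + \<beta> k) * indicator (ss_I a k) t)"

end

theory Submission
  imports Defs
begin

text \<open>
  On the \<open>k\<close>-th piece the fixed point equation gives
  \<open>f (S k x) - f (S k y) = d k * (f x - f y) + c k * a k * (x - y)\<close> with \<open>\<bar>d k\<bar> \<le> a k\<close>.
  So a Holder bound \<open>C * h powr \<alpha>\<close> for a pair at distance \<open>h\<close> yields the bound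
  \<open>a k powr (1 - \<alpha>) * C * h' powr \<alpha> + max \<bar>c k\<bar> * h'\<close> for its image at distance \<open>h' = a k * h\<close>,
  and this is at most \<open>C * h' powr \<alpha>\<close> once \<open>C\<close> is large, since \<open>a k \<le> max a k < 1\<close>.
  Pairs at distance at least \<open>min a k\<close> are handled by boundedness of \<open>f\<close>, smaller
  distances by induction over the scales \<open>(max a k) ^ m\<close>: a pair inside one piece is
  pulled back by the inverse of \<open>S k\<close>, which enlarges its distance; a pair straddling a
  partition point is split there, and both halves are images of pairs ending at \<open>0\<close> or
  \<open>1\<close>, where the estimate follows by the same induction using \<open>S 1\<close> and \<open>S n\<close> alone.
\<close>

lemma scale_induct [consumes 2, case_names step]:
  fixes D :: "'a \<Rightarrow> real" and r :: real
  assumes z: "z \<in> A" "0 < D z"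
    and step: "\<And>z. z \<in> A \<Longrightarrow> 0 < D z \<Longrightarrow> (\<And>w. w \<in> A \<Longrightarrow> D z \<le> r * D w \<Longrightarrow> P w) \<Longrightarrow> P z"
    and r: "0 < r" "r < 1"
    and D_le_1: "\<And>z. z \<in> A \<Longrightarrow> D z \<le> 1"
  shows "P z"
proof -
  have "\<forall>z\<in>A. r ^ m \<le> D z \<longrightarrow> P z" for m
  proof (induction m)
    case 0
    show ?case
    proof (intro ballI impI)
      fix z assume "z \<in> A" "r ^ 0 \<le> D z"
      moreover have "\<not> D z \<le> r * D w" if "w \<in> A" for w
        using D_le_1[OF that] \<open>r ^ 0 \<le> D z\<close> r by (simp add: not_le) (smt (verit) mult_left_le)
      ultimately show "P z" using step by force
    qed
  next
    case (Suc m)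
    show ?case
    proof (intro ballI impI)
      fix z assume "z \<in> A" "r ^ Suc m \<le> D z"
      moreover have "r ^ m \<le> D w" if "D z \<le> r * D w" for w
      proof -
        have "r * r ^ m \<le> r * D w" using \<open>r ^ Suc m \<le> D z\<close> that by simp
        then show ?thesis using r by simp
      qed
      moreover have "0 < D z" using \<open>r ^ Suc m \<le> D z\<close> r by (smt (verit) zero_less_power)
      ultimately show "P z" using step Suc.IH by blast
    qed
  qed
  moreover obtain m where "r ^ m < D z" using real_arch_pow_inv[OF z(2) r(2)] by blast
  ultimately show ?thesis using z(1) by (meson less_imp_le)
qed

lemma rescaled_holder_le:
  fixes a r \<alpha> u M C :: real
  assumes a: "0 < a" "a \<le> r" "r < 1" and \<alpha>: "0 < \<alpha>" "\<alpha> < 1"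
    and u: "0 \<le> u" "u \<le> 1" and M: "0 \<le> M" "M / (1 - r powr (1 - \<alpha>)) \<le> C"
  shows "a * (C * (u / a) powr \<alpha>) + M * u \<le> C * u powr \<alpha>"
proof -
  have gap: "0 < 1 - r powr (1 - \<alpha>)" using a \<alpha> powr01_less_one[of r "1 - \<alpha>"] by simp
  then have M_le: "M \<le> C * (1 - r powr (1 - \<alpha>))" using M(2) by (simp add: divide_le_eq mult.commute)
  have "0 \<le> C" using M gap by (meson divide_nonneg_pos order_trans)
  have u_le: "u \<le> u powr \<alpha>"
    using u \<alpha> powr_mono'[of \<alpha> 1 u] by (cases "u = 0") auto
  have "a * (C * (u / a) powr \<alpha>) + M * u = C * (a powr (1 - \<alpha>) * u powr \<alpha>) + M * u"
    using a u by (simp add: powr_divide powr_diff field_simps)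
  also have "\<dots> \<le> C * (r powr (1 - \<alpha>) * u powr \<alpha>) + C * (1 - r powr (1 - \<alpha>)) * u powr \<alpha>"
    using a \<alpha> u \<open>0 \<le> C\<close> M_le u_le gap by (intro add_mono mult_left_mono mult_right_mono powr_mono2 mult_mono) auto
  also have "\<dots> = C * u powr \<alpha>" by (simp add: algebra_simps)
  finally show ?thesis .
qed

locale ss_partition =
  fixes n :: nat and a :: "nat \<Rightarrow> real"
  assumes n_ge_2: "n \<ge> 2"
    and a_pos: "\<And>k. k \<in> {1..n} \<Longrightarrow> 0 < a k"
    and sum_a: "(\<Sum>k=1..n. a k) = 1"
begin

lemma ss_alpha_1 [simp]: "ss_alpha a 1 = 0" "ss_alpha a (Suc 0) = 0"
proof -
  show "ss_alpha a 1 = 0" by (simp add: ss_alpha_def)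
  then show "ss_alpha a (Suc 0) = 0" by simp
qed

lemma ss_alpha_Suc: "1 \<le> k \<Longrightarrow> ss_alpha a (Suc k) = ss_alpha a k + a k"
  by (simp add: ss_alpha_def)

lemma ss_alpha_last: "ss_alpha a (n + 1) = 1"
  using sum_a by (simp add: ss_alpha_def atLeastLessThanSuc_atLeastAtMost)

lemma ss_alpha_mono:
  assumes "1 \<le> i" "i \<le> j" "j \<le> n + 1"
  shows "ss_alpha a i \<le> ss_alpha a j"
  using assms(2,3)
proof (induction j rule: dec_induct)
  case (step m)
  then show ?case using a_pos[of m] ss_alpha_Suc[of m] assms(1) by simp
qed simp

lemma ss_alpha_bounds:
  assumes "1 \<le> k" "k \<le> n + 1"
  shows "0 \<le> ss_alpha a k \<and> ss_alpha a k \<le> 1"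
proof -
  have "ss_alpha a 1 \<le> ss_alpha a k" "ss_alpha a k \<le> ss_alpha a (n + 1)"
    by (rule ss_alpha_mono; use assms in simp)+
  then show ?thesis using ss_alpha_1(1) ss_alpha_last by linarith
qed

lemma mem_ss_I_iff:
  assumes k: "k \<in> {1..n}" and j: "j \<in> {1..n}" and t: "ss_alpha a k < t" "t \<le> ss_alpha a (k + 1)"
  shows "t \<in> ss_I a j \<longleftrightarrow> j = k"
proof -
  have "ss_alpha a (j + 1) \<le> ss_alpha a k" if "j < k"
    using that j k ss_alpha_mono[of "j + 1" k] by simp
  moreover have "ss_alpha a (k + 1) \<le> ss_alpha a j" if "k < j"
    using that j k ss_alpha_mono[of "k + 1" j] by simp
  moreover have "0 \<le> ss_alpha a k" using ss_alpha_bounds k by simp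
  ultimately show ?thesis using t k j
    by (cases j k rule: linorder_cases) (auto simp: ss_I_def numeral_2_eq_2)
qed

lemma ss_S_inverse: "k \<in> {1..n} \<Longrightarrow> inv_into UNIV (ss_S a k) (ss_S a k x) = x"
  using a_pos[of k] by (intro inv_into_f_f injI) (auto simp: ss_S_def)

lemma ss_S_bounds:
  assumes k: "k \<in> {1..n}" and x: "0 \<le> x" "x \<le> 1"
  shows "ss_alpha a k \<le> ss_S a k x" "ss_S a k x \<le> ss_alpha a (k + 1)"
  using a_pos[OF k] x ss_alpha_Suc[of k] k by (auto simp: ss_S_def mult_left_le)

lemma ss_S_in_unit: "k \<in> {1..n} \<Longrightarrow> x \<in> {0..1} \<Longrightarrow> ss_S a k x \<in> {0..1}"
  using ss_S_bounds[of k x] ss_alpha_bounds[of k] ss_alpha_bounds[of "k + 1"] by fastforce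

lemma ex_piece:
  assumes "0 < t" "t \<le> 1"
  shows "\<exists>k\<in>{1..n}. ss_alpha a k < t \<and> t \<le> ss_alpha a (k + 1)"
proof -
  have "m \<le> n \<Longrightarrow> t \<le> ss_alpha a (m + 1) \<Longrightarrow> \<exists>k\<in>{1..m}. ss_alpha a k < t \<and> t \<le> ss_alpha a (k + 1)" for m
  proof (induction m)
    case (Suc m)
    show ?case
    proof (cases "t \<le> ss_alpha a (m + 1)")
      case True
      then show ?thesis using Suc by force
    next
      case False
      then show ?thesis using Suc by (intro bexI[of _ "Suc m"]) auto
    qed
  qed (use assms in simp)
  then show ?thesis using ss_alpha_last assms by simp
qed

definition amax :: real where "amax = Max (a ` {1..n})"
definition amin :: real where "amin = Min (a ` {1..n})"

lemma amax_ge: "k \<in> {1..n} \<Longrightarrow> a k \<le> amax"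
  unfolding amax_def by (rule Max_ge) auto

lemma amin_le: "k \<in> {1..n} \<Longrightarrow> amin \<le> a k"
  unfolding amin_def by (rule Min_le) auto

lemma amin_pos: "0 < amin"
  using Min_in[of "a ` {1..n}"] n_ge_2 a_pos by (fastforce simp: amin_def)

lemma amax_less_1: "amax < 1"
proof -
  obtain k where k: "k \<in> {1..n}" "amax = a k"
    using Max_in[of "a ` {1..n}"] n_ge_2 by (fastforce simp: amax_def)
  define j :: nat where "j = (if k = 1 then 2 else 1)"
  have j: "j \<in> {1..n} - {k}" using n_ge_2 k by (auto simp: j_def)
  have "a j \<le> sum a ({1..n} - {k})"
    using j a_pos by (intro member_le_sum) (auto intro: less_imp_le)
  moreover have "sum a {1..n} = a k + sum a ({1..n} - {k})" using k by (simp add: sum.remove)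
  ultimately show ?thesis using sum_a k a_pos[of j] j by simp
qed

lemma amax_pos: "0 < amax"
  using amin_pos amin_le[of 1] amax_ge[of 1] n_ge_2 by fastforce

lemma a_bounds: "k \<in> {1..n} \<Longrightarrow> amin \<le> a k \<and> a k \<le> amax \<and> 0 < a k \<and> a k < 1"
  using amin_le amax_ge a_pos amax_less_1 by fastforce

end

locale self_similar = ss_partition n a
  for n :: nat and a :: "nat \<Rightarrow> real" +
  fixes c d \<beta> :: "nat \<Rightarrow> real" and f :: "real \<Rightarrow> real"
  assumes cont: "continuous_on {0..1} f"
    and fixed_point: "\<And>t. t \<in> {0..1} \<Longrightarrow> f t = ss_G n a c d \<beta> f t"
    and abs_d_le: "\<And>k. k \<in> {1..n} \<Longrightarrow> \<bar>d k\<bar> \<le> a k"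
begin

lemma ss_eq_interior:
  assumes k: "k \<in> {1..n}" and x: "0 < x" "x \<le> 1"
  shows "f (ss_S a k x) = d k * f x + c k * ss_S a k x + \<beta> k"
proof -
  define t where "t = ss_S a k x"
  have t: "ss_alpha a k < t" "t \<le> ss_alpha a (k + 1)"
    using a_pos[OF k] x ss_S_bounds[OF k] by (auto simp: t_def ss_S_def)
  have "f t = ss_G n a c d \<beta> f t" using fixed_point ss_S_in_unit[OF k] x by (simp add: t_def)
  also have "\<dots> = (\<Sum>j=1..n. if j = k then d k * f (inv_into UNIV (ss_S a k) t) + c k * t + \<beta> k else 0)"
    unfolding ss_G_def by (rule sum.cong) (use mem_ss_I_iff[OF k _ t] in auto)
  also have "\<dots> = d k * f x + c k * t + \<beta> k" using k ss_S_inverse[OF k] by (simp add: t_def)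
  finally show ?thesis by (simp add: t_def)
qed

text \<open>At \<open>x = 0\<close> the point \<open>S k 0\<close> lies in the previous piece, so the equation there
  follows only by continuity.\<close>

lemma ss_eq:
  assumes k: "k \<in> {1..n}" and x: "x \<in> {0..1}"
  shows "f (ss_S a k x) = d k * f x + c k * ss_S a k x + \<beta> k"
proof -
  define g where "g x = f (ss_S a k x) - (d k * f x + c k * ss_S a k x + \<beta> k)" for x
  have S_cont: "continuous_on {0..1} (ss_S a k)" unfolding ss_S_def by (intro continuous_intros)
  have "continuous_on {0..1} g"
    unfolding g_def using ss_S_in_unit[OF k]
    by (intro continuous_intros continuous_on_compose2[OF cont S_cont] cont S_cont) auto
  then have "closed {y \<in> {0..1}. g y = 0}"
    by (rule continuous_closed_preimage_constant) simp
  moreover have "{0<..1} \<subseteq> {y \<in> {0..1}. g y = 0}"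
    using ss_eq_interior[OF k] by (auto simp: g_def)
  ultimately have "closure {0<..(1::real)} \<subseteq> {y \<in> {0..1}. g y = 0}"
    by (intro closure_minimal)
  then show ?thesis using x by (auto simp: g_def)
qed

lemma ss_diff_le:
  assumes k: "k \<in> {1..n}" and x: "x \<in> {0..1}" and y: "y \<in> {0..1}"
  shows "\<bar>f (ss_S a k x) - f (ss_S a k y)\<bar> \<le> a k * \<bar>f x - f y\<bar> + \<bar>c k\<bar> * (a k * \<bar>x - y\<bar>)"
proof -
  have "f (ss_S a k x) - f (ss_S a k y) = d k * (f x - f y) + c k * (a k * (x - y))"
    using ss_eq[OF k x] ss_eq[OF k y] by (simp add: ss_S_def algebra_simps)
  also have "\<bar>\<dots>\<bar> \<le> \<bar>d k\<bar> * \<bar>f x - f y\<bar> + \<bar>c k\<bar> * (a k * \<bar>x - y\<bar>)"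
    using a_pos[OF k] abs_triangle_ineq[of "d k * (f x - f y)" "c k * (a k * (x - y))"] by (simp add: abs_mult)
  also have "\<dots> \<le> a k * \<bar>f x - f y\<bar> + \<bar>c k\<bar> * (a k * \<bar>x - y\<bar>)"
    using abs_d_le[OF k] by (simp add: mult_right_mono)
  finally show ?thesis .
qed

definition cmax :: real where "cmax = Max ((\<lambda>k. \<bar>c k\<bar>) ` {1..n})"

lemma cmax_ge: "k \<in> {1..n} \<Longrightarrow> \<bar>c k\<bar> \<le> cmax"
  unfolding cmax_def by (rule Max_ge) auto

lemma cmax_nonneg: "0 \<le> cmax"
  using cmax_ge[of 1] n_ge_2 by fastforce

end

locale self_similar_holder = self_similar n a c d \<beta> f
  for n :: nat and a c d \<beta> :: "nat \<Rightarrow> real" and f :: "real \<Rightarrow> real" +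
  fixes \<alpha> B :: real
  assumes \<alpha>: "0 < \<alpha>" "\<alpha> < 1"
    and f_bound: "\<And>x. x \<in> {0..1} \<Longrightarrow> \<bar>f x\<bar> \<le> B"
begin

definition holder_const :: real
  where "holder_const = max (2 * B / amin powr \<alpha>) (cmax / (1 - amax powr (1 - \<alpha>)))"

lemma holder_const_nonneg: "0 \<le> holder_const"
  using f_bound[of 0] amin_pos by (auto simp: holder_const_def intro!: max.coboundedI1)

lemma holder_large_scale:
  assumes C: "holder_const \<le> C" and xy: "x \<in> {0..1}" "y \<in> {0..1}" "amin \<le> \<bar>x - y\<bar>"
  shows "\<bar>f x - f y\<bar> \<le> C * \<bar>x - y\<bar> powr \<alpha>"
proof -
  have pos: "0 < amin powr \<alpha>" using amin_pos by simp
  have "\<bar>f x - f y\<bar> \<le> 2 * B" using f_bound[OF xy(1)] f_bound[OF xy(2)] by linarith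
  also have "\<dots> = 2 * B / amin powr \<alpha> * amin powr \<alpha>" using pos by simp
  also have "\<dots> \<le> C * \<bar>x - y\<bar> powr \<alpha>"
    using C holder_const_nonneg pos xy(3) amin_pos \<alpha> f_bound[OF xy(1)]
    by (intro mult_mono powr_mono2) (auto simp: holder_const_def)
  finally show ?thesis .
qed

lemma holder_rescale:
  assumes C: "holder_const \<le> C" and k: "k \<in> {1..n}" and xy: "x \<in> {0..1}" "y \<in> {0..1}"
    and holder: "\<bar>f x - f y\<bar> \<le> C * \<bar>x - y\<bar> powr \<alpha>"
  shows "\<bar>f (ss_S a k x) - f (ss_S a k y)\<bar> \<le> C * (a k * \<bar>x - y\<bar>) powr \<alpha>"
proof -
  have ak: "0 < a k" "a k \<le> amax" "a k \<le> 1" using a_bounds[OF k] by auto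
  have "\<bar>f (ss_S a k x) - f (ss_S a k y)\<bar> \<le> a k * \<bar>f x - f y\<bar> + \<bar>c k\<bar> * (a k * \<bar>x - y\<bar>)"
    by (rule ss_diff_le[OF k xy])
  also have "\<dots> \<le> a k * (C * (a k * \<bar>x - y\<bar> / a k) powr \<alpha>) + cmax * (a k * \<bar>x - y\<bar>)"
    using holder ak cmax_ge[OF k] by (intro add_mono mult_left_mono mult_right_mono) auto
  also have "\<dots> \<le> C * (a k * \<bar>x - y\<bar>) powr \<alpha>"
    using ak amax_less_1 \<alpha> cmax_nonneg C xy
    by (intro rescaled_holder_le) (auto simp: holder_const_def mult_le_one)
  finally show ?thesis .
qed

lemma holder_at_0_and_1:
  assumes u: "u \<in> {0..1}"
  shows "\<bar>f u - f 0\<bar> \<le> holder_const * u powr \<alpha> \<and> \<bar>f (1 - u) - f 1\<bar> \<le> holder_const * u powr \<alpha>"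
    (is "?P u")
proof (cases "u = 0")
  case False
  have "0 < id u" using u False by simp
  with u show ?thesis
  proof (induction u rule: scale_induct[where D = id and A = "{0..1}" and r = amax])
    case (step u)
    then have u: "u \<in> {0..1}" "0 < u" by auto
    show ?case
    proof (cases "amin \<le> u")
      case True
      then show ?thesis
        using holder_large_scale[of holder_const u 0] holder_large_scale[of holder_const "1 - u" 1] u
        by auto
    next
      case False
      have a1: "1 \<in> {1..n}" and an: "n \<in> {1..n}" using n_ge_2 by auto
      have "u / a 1 \<in> {0..1}" "u / a n \<in> {0..1}"
        using False u a_bounds[OF a1] a_bounds[OF an] by auto
      moreover have "u \<le> amax * (u / a 1)" "u \<le> amax * (u / a n)"
        using u a_bounds[OF a1] a_bounds[OF an] by (auto simp: field_simps mult_right_mono)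
      ultimately have "?P (u / a 1)" "?P (u / a n)" using step.IH by auto
      have "\<bar>f (ss_S a 1 (u / a 1)) - f (ss_S a 1 0)\<bar> \<le> holder_const * (a 1 * \<bar>u / a 1 - 0\<bar>) powr \<alpha>"
        by (rule holder_rescale[OF order_refl a1])
          (use \<open>?P (u / a 1)\<close> \<open>u / a 1 \<in> {0..1}\<close> u a_bounds[OF a1] in \<open>auto simp: abs_of_nonneg\<close>)
      moreover have "\<bar>f (ss_S a n (1 - u / a n)) - f (ss_S a n 1)\<bar>
          \<le> holder_const * (a n * \<bar>1 - u / a n - 1\<bar>) powr \<alpha>"
        by (rule holder_rescale[OF order_refl an])
          (use \<open>?P (u / a n)\<close> \<open>u / a n \<in> {0..1}\<close> u a_bounds[OF an] in \<open>auto simp: abs_of_nonneg\<close>)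
      moreover have "ss_alpha a n = 1 - a n" using ss_alpha_last ss_alpha_Suc[of n] n_ge_2 by simp
      ultimately show ?thesis
        using u a_bounds[OF a1] a_bounds[OF an] by (simp add: ss_S_def right_diff_distrib)
    qed
  qed (use amax_pos amax_less_1 in auto)
qed simp

lemma holder_right_of_node:
  assumes k: "k \<in> {1..n}" and v: "0 \<le> v" "v \<le> a k"
  shows "\<bar>f (ss_alpha a k + v) - f (ss_alpha a k)\<bar> \<le> holder_const * v powr \<alpha>"
proof -
  have ak: "0 < a k" using a_pos[OF k] .
  have "v / a k \<in> {0..1}" using ak v by auto
  then have "\<bar>f (ss_S a k (v / a k)) - f (ss_S a k 0)\<bar> \<le> holder_const * (a k * \<bar>v / a k - 0\<bar>) powr \<alpha>"
    using holder_at_0_and_1[of "v / a k"] ak v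
    by (intro holder_rescale[OF order_refl k]) (auto simp: abs_of_nonneg)
  then show ?thesis using ak v by (simp add: ss_S_def add.commute)
qed

lemma holder_left_of_node:
  assumes k: "k \<in> {1..n}" and u: "0 \<le> u" "u \<le> a k"
  shows "\<bar>f (ss_alpha a (k + 1) - u) - f (ss_alpha a (k + 1))\<bar> \<le> holder_const * u powr \<alpha>"
proof -
  have ak: "0 < a k" using a_pos[OF k] .
  have "u / a k \<in> {0..1}" using ak u by auto
  then have "\<bar>f (ss_S a k (1 - u / a k)) - f (ss_S a k 1)\<bar>
      \<le> holder_const * (a k * \<bar>1 - u / a k - 1\<bar>) powr \<alpha>"
    using holder_at_0_and_1[of "u / a k"] ak u
    by (intro holder_rescale[OF order_refl k]) (auto simp: abs_of_nonneg)
  moreover have "ss_alpha a (k + 1) = ss_alpha a k + a k" using ss_alpha_Suc[of k] k by simp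
  ultimately show ?thesis using ak u by (simp add: ss_S_def right_diff_distrib algebra_simps)
qed

lemma holder_across_node:
  assumes k: "k \<in> {1..n}" "k + 1 \<le> n"
    and x: "ss_alpha a (k + 1) - a k \<le> x" "x \<le> ss_alpha a (k + 1)"
    and y: "ss_alpha a (k + 1) \<le> y" "y \<le> ss_alpha a (k + 1) + a (k + 1)"
  shows "\<bar>f y - f x\<bar> \<le> 2 * holder_const * (y - x) powr \<alpha>"
proof -
  define p where "p = ss_alpha a (k + 1)"
  have "\<bar>f y - f x\<bar> \<le> \<bar>f (p - (p - x)) - f p\<bar> + \<bar>f (p + (y - p)) - f p\<bar>"
    by simp
  also have "\<dots> \<le> holder_const * (p - x) powr \<alpha> + holder_const * (y - p) powr \<alpha>"
    using holder_left_of_node[OF k(1), of "p - x"] holder_right_of_node[of "k + 1" "y - p"] k x y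
    by (intro add_mono) (auto simp: p_def)
  also have "\<dots> \<le> holder_const * (y - x) powr \<alpha> + holder_const * (y - x) powr \<alpha>"
    using holder_const_nonneg x y \<alpha>
    by (intro add_mono mult_left_mono powr_mono2) (auto simp: p_def)
  finally show ?thesis by (simp add: algebra_simps)
qed

lemma holder_ordered:
  assumes "0 \<le> x" "x < y" "y \<le> 1"
  shows "\<bar>f y - f x\<bar> \<le> 2 * holder_const * (y - x) powr \<alpha>"
proof -
  let ?A = "{(x, y). 0 \<le> x \<and> x \<le> y \<and> y \<le> (1::real)}"
  define P where "P = (\<lambda>(x, y). \<bar>f y - f x\<bar> \<le> 2 * holder_const * (y - x) powr \<alpha>)"
  have C: "holder_const \<le> 2 * holder_const" using holder_const_nonneg by simp
  have "P (x, y)"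
  proof (rule scale_induct[where A = ?A and D = "\<lambda>(x, y). y - x" and r = amax and P = P])
    show "(x, y) \<in> ?A" "0 < (\<lambda>(x, y). y - x) (x, y)" using assms by auto
    show "0 < amax" "amax < 1" using amax_pos amax_less_1 .
    show "\<And>z. z \<in> ?A \<Longrightarrow> (\<lambda>(x, y). y - x) z \<le> 1" by auto
    fix z assume z: "z \<in> ?A" "0 < (\<lambda>(x, y). y - x) z"
      and IH: "\<And>w. w \<in> ?A \<Longrightarrow> (\<lambda>(x, y). y - x) z \<le> amax * (\<lambda>(x, y). y - x) w \<Longrightarrow> P w"
    obtain x y where z_eq: "z = (x, y)" by fastforce
    have xy: "0 \<le> x" "x < y" "y \<le> 1" using z by (auto simp: z_eq)
    have "\<bar>f y - f x\<bar> \<le> 2 * holder_const * (y - x) powr \<alpha>"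
    proof (cases "amin \<le> y - x")
      case True
      then show ?thesis using holder_large_scale[OF C, of y x] xy by auto
    next
      case False
      obtain k where k: "k \<in> {1..n}" "ss_alpha a k < y" "y \<le> ss_alpha a (k + 1)"
        using ex_piece[of y] xy by auto
      have ak: "amin \<le> a k" "a k \<le> amax" "0 < a k" using a_bounds[OF k(1)] by auto
      have next_node: "ss_alpha a (k + 1) = ss_alpha a k + a k" using ss_alpha_Suc[of k] k by simp
      show ?thesis
      proof (cases "ss_alpha a k \<le> x")
        case True
        define x' where "x' = (x - ss_alpha a k) / a k"
        define y' where "y' = (y - ss_alpha a k) / a k"
        have "(x', y') \<in> ?A" using True xy k ak next_node
          by (auto simp: x'_def y'_def divide_right_mono field_simps)
        moreover have "y - x = a k * (y' - x')" using ak by (simp add: x'_def y'_def field_simps)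
        moreover have "a k * (y' - x') \<le> amax * (y' - x')"
          using ak \<open>(x', y') \<in> ?A\<close> by (intro mult_right_mono) auto
        ultimately have "\<bar>f y' - f x'\<bar> \<le> 2 * holder_const * \<bar>y' - x'\<bar> powr \<alpha>"
          using IH[of "(x', y')"] xy by (auto simp: z_eq P_def)
        then have "\<bar>f (ss_S a k y') - f (ss_S a k x')\<bar> \<le> 2 * holder_const * (a k * \<bar>y' - x'\<bar>) powr \<alpha>"
          using \<open>(x', y') \<in> ?A\<close> by (intro holder_rescale[OF C k(1)]) auto
        moreover have "ss_S a k y' = y" "ss_S a k x' = x" "a k * \<bar>y' - x'\<bar> = y - x"
          using ak xy by (auto simp: ss_S_def x'_def y'_def field_simps)
        ultimately show ?thesis by simp
      next
        case False
        then have "k \<noteq> 1" using xy by auto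
        then obtain j where j: "k = Suc j" "j \<in> {1..n}" using k(1) by (cases k) auto
        have "amin \<le> a j" using a_bounds[OF j(2)] by simp
        then show ?thesis
          using holder_across_node[of j x y] j k False \<open>\<not> amin \<le> y - x\<close> next_node by auto
      qed
    qed
    then show "P z" by (simp add: z_eq P_def)
  qed
  then show ?thesis by (simp add: P_def)
qed

end

context self_similar
begin

lemma holder_continuous:
  assumes "0 < \<alpha>" "\<alpha> < 1"
  shows "\<exists>C\<ge>0. \<forall>x\<in>{0..1}. \<forall>y\<in>{0..1}. \<bar>f x - f y\<bar> \<le> C * \<bar>x - y\<bar> powr \<alpha>"
proof -
  have "bounded (f ` {0..1})" by (intro compact_imp_bounded compact_continuous_image cont) simp
  then obtain B where "\<forall>x\<in>{0..1}. \<bar>f x\<bar> \<le> B" unfolding bounded_iff by auto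
  then interpret self_similar_holder n a c d \<beta> f \<alpha> B
    using assms by unfold_locales auto
  have "\<bar>f x - f y\<bar> \<le> 2 * holder_const * \<bar>x - y\<bar> powr \<alpha>" if "x \<in> {0..1}" "y \<in> {0..1}" for x y
    using holder_ordered[of x y] holder_ordered[of y x] that
    by (cases x y rule: linorder_cases) (auto simp: abs_minus_commute)
  then show ?thesis using holder_const_nonneg by (intro exI[of _ "2 * holder_const"]) auto
qed

end

theorem theorem4:
  fixes n :: nat and a c d \<beta> :: "nat \<Rightarrow> real" and f :: "real \<Rightarrow> real"
  assumes "n \<ge> 2"
    and "\<forall>k\<in>{1..n}. a k > 0"
    and "(\<Sum>k=1..n. a k) = 1"
    and "\<forall>k\<in>{1..n}. \<bar>d k\<bar> < 1"
    and "continuous_on {0..1} f"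
    and "\<forall>t\<in>{0..1}. f t = ss_G n a c d \<beta> f t"
    and "\<forall>i\<in>{1..n}. \<bar>d i\<bar> / a i = 1"
  shows "\<forall>\<alpha>\<in>{0<..<1::real}. \<exists>C\<ge>0. \<forall>x\<in>{0..1}. \<forall>y\<in>{0..1}.
           \<bar>f x - f y\<bar> \<le> C * \<bar>x - y\<bar> powr \<alpha>"
proof -
  have "\<bar>d k\<bar> \<le> a k" if "k \<in> {1..n}" for k
    using assms(2,7) that by (metis divide_eq_1_iff order_refl)
  then interpret self_similar n a c d \<beta> f
    using assms by unfold_locales auto
  show ?thesis using holder_continuous by auto
qed

end
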